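(* Over all 3-periodics of $\mathcal{E}$, the circumcenter $X_3^\dagger$ of the focus-inversive triangle moves on the circle with center and radius \[C_3^\dagger=\left(-c\left(1+\rho^2\frac{a^2+b^2}{2b^4}\right),0\right),\qquad R_3^\dagger=\rho^2\,\frac{a(\delta-b^2)}{2b^4}.\]
   Context: Let $a>b>0$ and let $\mathcal{E}$ be the ellipse $x^2/a^2+y^2/b^2=1$. Set $c=\sqrt{a^2-b^2}$, $\delta=\sqrt{a^4-a^2b^2+b^4}$, and let the foci be $f_1=(-c,0)$, $f_2=(c,0)$. A 3-periodic is a triangle $P_1P_2P_3$ with vertices on $\mathcal{E}$ such that at each vertex the normal to $\mathcal{E}$ bisects the angle formed by the two sides meeting at that vertex; these form a one-parameter family (one through every point of $\mathcal{E}$). Fix $\rho>0$; the focus-inversive triangle has vertices $P_i^\dagger=f_1+(\rho/d_{1,i})^2(P_i-f_1)$, $d_{1,i}=|P_i-f_1|$. *)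

theory Defs
  imports "HOL-Analysis.Analysis"
begin

text \<open>Points of the plane are pairs of reals; dist / norm / inner on real \<times> real are Euclidean.\<close>

definition on_ellipse :: "real \<Rightarrow> real \<Rightarrow> real \<times> real \<Rightarrow> bool" where
  "on_ellipse a b P \<longleftrightarrow> (fst P)\<^sup>2 / a\<^sup>2 + (snd P)\<^sup>2 / b\<^sup>2 = 1"

text \<open>A normal vector to the ellipse at P (gradient of the defining function, up to factor 2).\<close>
definition ellipse_normal :: "real \<Rightarrow> real \<Rightarrow> real \<times> real \<Rightarrow> real \<times> real" where
  "ellipse_normal a b P = (fst P / a\<^sup>2, snd P / b\<^sup>2)"

text \<open>At vertex P with neighbours Q and R the normal line bisects the angle QPR:
  the unit vectors from P towards Q and R make equal angles with the normal.\<close>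
definition normal_bisects :: "real \<Rightarrow> real \<Rightarrow> real \<times> real \<Rightarrow> real \<times> real \<Rightarrow> real \<times> real \<Rightarrow> bool" where
  "normal_bisects a b P Q R \<longleftrightarrow>
     ((Q - P) \<bullet> ellipse_normal a b P) / norm (Q - P)
       = ((R - P) \<bullet> ellipse_normal a b P) / norm (R - P)"

definition three_periodic :: "real \<Rightarrow> real \<Rightarrow> real \<times> real \<Rightarrow> real \<times> real \<Rightarrow> real \<times> real \<Rightarrow> bool" where
  "three_periodic a b P1 P2 P3 \<longleftrightarrow>
     on_ellipse a b P1 \<and> on_ellipse a b P2 \<and> on_ellipse a b P3 \<and>
     P1 \<noteq> P2 \<and> P2 \<noteq> P3 \<and> P1 \<noteq> P3 \<and>
     normal_bisects a b P1 P2 P3 \<and> normal_bisects a b P2 P3 P1 \<and> normal_bisects a b P3 P1 P2"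

definition invert :: "real \<times> real \<Rightarrow> real \<Rightarrow> real \<times> real \<Rightarrow> real \<times> real" where
  "invert f \<rho> P = f + (\<rho> / dist P f)\<^sup>2 *\<^sub>R (P - f)"

definition is_circumcenter :: "real \<times> real \<Rightarrow> real \<times> real \<Rightarrow> real \<times> real \<Rightarrow> real \<times> real \<Rightarrow> bool" where
  "is_circumcenter X A B C \<longleftrightarrow> dist X A = dist X B \<and> dist X B = dist X C"

end

theory Submission
  imports Defs
begin

text \<open>
A line \<open>u \<bullet> X = p\<close> with \<open>|u| = 1\<close> touches the confocal conic
\<open>x\<^sup>2 / (a\<^sup>2 - l) + y\<^sup>2 / (b\<^sup>2 - l) = 1\<close> exactly when
\<open>l = a\<^sup>2 u\<^sub>1\<^sup>2 + b\<^sup>2 u\<^sub>2\<^sup>2 - p\<^sup>2\<close>, and the bisection condition at a vertex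
says that the two sides through it give the same \<open>l\<close>: the sides of a 3-periodic touch a
common confocal caustic. In the eccentric coordinate \<open>z\<close> of the unit circle
(\<open>P = (a Re z, b Im z)\<close>) tangency becomes a symmetric biquadratic relation between the
endpoints of a side, and three points related pairwise in this way force the closure condition
\<open>t\<^sup>2 + 2 q = 3\<close>, which determines the caustic in terms of \<open>\<delta>\<close>.

A circle meets the ellipse in four points whose eccentric coordinates multiply to 1. Taking the
fourth point \<open>1 / (z\<^sub>1 z\<^sub>2 z\<^sub>3)\<close> shows that the circumcircle of a 3-periodic has a
centre \<open>C\<close> with \<open>|P - C|\<^sup>2 = |C|\<^sup>2 + \<delta>\<close> and that \<open>C\<close> moves on an ellipse.
Inversion about the focus \<open>f\<close> maps this circle to a circle through the inverted vertices,
whose centre \<open>f + \<rho>\<^sup>2 (C - f) / pow\<^sub>f\<close> is therefore \<open>X\<^sub>3\<^sup>\<dagger>\<close>; substituting the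
locus of \<open>C\<close> gives the circle of the theorem.
\<close>

section \<open>Circumcentres in the plane\<close>

definition det2 :: "real \<times> real \<Rightarrow> real \<times> real \<Rightarrow> real" where
  "det2 u v = fst u * snd v - snd u * fst v"

lemma dist_sq_Pair: "(dist (x, y) (u, v))\<^sup>2 = (x - u)\<^sup>2 + (y - v)\<^sup>2"
  by (simp add: dist_Pair_Pair dist_real_def)

lemma perpendicular_det2_eq_0:
  fixes u m w :: "real \<times> real"
  assumes "u \<noteq> 0" "u \<bullet> m = 0" "u \<bullet> w = 0"
  shows "det2 m w = 0"
proof -
  obtain u1 u2 m1 m2 w1 w2 where uv: "u = (u1, u2)" "m = (m1, m2)" "w = (w1, w2)"
    by (cases u, cases m, cases w)
  have "u1 * m1 + u2 * m2 = 0" "u1 * w1 + u2 * w2 = 0"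
    using assms(2,3) by (simp_all add: uv inner_Pair)
  then have "u1 * (m1 * w2 - m2 * w1) = 0" "u2 * (m1 * w2 - m2 * w1) = 0"
    by algebra+
  then show ?thesis
    using assms(1) by (auto simp: uv det2_def zero_prod_def)
qed

lemma collinear_not_circumcenter:
  assumes "det2 (B - A) (C - A) = 0" "A \<noteq> B" "A \<noteq> C" "B \<noteq> C"
  shows "\<not> is_circumcenter X A B C"
proof
  assume "is_circumcenter X A B C"
  define m w g where "m = B - A" and "w = C - A" and "g = X - A"
  have "(norm g)\<^sup>2 = (norm (g - m))\<^sup>2" "(norm g)\<^sup>2 = (norm (g - w))\<^sup>2"
    using \<open>is_circumcenter X A B C\<close>
    by (simp_all add: is_circumcenter_def dist_norm norm_minus_commute m_def w_def g_def)
  then have gm: "2 * (g \<bullet> m) = m \<bullet> m" and gw: "2 * (g \<bullet> w) = w \<bullet> w"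
    by (simp_all add: power2_norm_eq_inner inner_diff inner_commute)
  obtain m1 m2 w1 w2 g1 g2 where v: "m = (m1, m2)" "w = (w1, w2)" "g = (g1, g2)"
    by (cases m, cases w, cases g)
  have "m \<noteq> 0" using assms(2) by (simp add: m_def)
  then have m0: "m1\<^sup>2 + m2\<^sup>2 \<noteq> 0" by (simp add: v sum_power2_eq_zero_iff zero_prod_def)
  have "m1 * w2 = m2 * w1" using assms(1) by (simp add: m_def[symmetric] w_def[symmetric] v det2_def)
  define p where "p = m1 * w1 + m2 * w2"
  \<comment> \<open>in the plane, vanishing determinant makes w a multiple of m\<close>
  have "(m1\<^sup>2 + m2\<^sup>2) * w1 = p * m1" "(m1\<^sup>2 + m2\<^sup>2) * w2 = p * m2"
    using \<open>m1 * w2 = m2 * w1\<close> unfolding p_def by (simp_all add: power2_eq_square algebra_simps)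
  moreover have "2 * (g1 * m1 + g2 * m2) = m1\<^sup>2 + m2\<^sup>2" "2 * (g1 * w1 + g2 * w2) = w1\<^sup>2 + w2\<^sup>2"
    using gm gw by (simp_all add: v inner_Pair power2_eq_square)
  ultimately have "(m1\<^sup>2 + m2\<^sup>2) * (w1\<^sup>2 + w2\<^sup>2) = (m1\<^sup>2 + m2\<^sup>2) * p"
    by algebra
  then have ww: "w1\<^sup>2 + w2\<^sup>2 = p" using m0 by (metis mult_left_cancel)
  have "(m1\<^sup>2 + m2\<^sup>2) * (w1\<^sup>2 + w2\<^sup>2) = p\<^sup>2"
    using \<open>m1 * w2 = m2 * w1\<close> unfolding p_def by algebra
  then have "(m1\<^sup>2 + m2\<^sup>2) * p = p\<^sup>2" by (simp only: ww)
  then have "p * (p - (m1\<^sup>2 + m2\<^sup>2)) = 0" by (simp add: power2_eq_square algebra_simps)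
  then have "p = 0 \<or> p = m1\<^sup>2 + m2\<^sup>2" by simp
  moreover have "(w1 - m1)\<^sup>2 + (w2 - m2)\<^sup>2 = (w1\<^sup>2 + w2\<^sup>2) - 2 * p + (m1\<^sup>2 + m2\<^sup>2)"
    unfolding p_def by (simp add: power2_eq_square algebra_simps)
  ultimately consider "w1\<^sup>2 + w2\<^sup>2 = 0" | "(w1 - m1)\<^sup>2 + (w2 - m2)\<^sup>2 = 0"
    using ww by fastforce
  moreover have "w \<noteq> 0" "w \<noteq> m" using assms(3,4) by (auto simp: m_def w_def)
  ultimately show False by cases (auto simp: sum_power2_eq_zero_iff v zero_prod_def)
qed

lemma is_circumcenter_unique:
  assumes "is_circumcenter X A B C" "is_circumcenter Y A B C" "A \<noteq> B" "A \<noteq> C" "B \<noteq> C"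
  shows "X = Y"
proof (rule ccontr)
  assume "X \<noteq> Y"
  have power_diff: "2 * ((Y - X) \<bullet> P) = (norm Y)\<^sup>2 - (norm X)\<^sup>2 + (dist X P)\<^sup>2 - (dist Y P)\<^sup>2"
    for P :: "real \<times> real"
    by (simp add: dist_norm power2_norm_eq_inner inner_diff inner_commute algebra_simps)
  have "(Y - X) \<bullet> (B - A) = 0" "(Y - X) \<bullet> (C - A) = 0"
    using power_diff[of A] power_diff[of B] power_diff[of C] assms(1,2)
    by (simp_all add: is_circumcenter_def inner_diff_right)
  then have "det2 (B - A) (C - A) = 0"
    using \<open>X \<noteq> Y\<close> by (intro perpendicular_det2_eq_0[of "Y - X"]) auto
  then show False
    using collinear_not_circumcenter assms(1,3-5) by blast
qed

section \<open>Circle inversion\<close>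

lemma invert_minus_center: "invert f \<rho> P - f = (\<rho>\<^sup>2 / (norm (P - f))\<^sup>2) *\<^sub>R (P - f)"
  by (simp add: invert_def dist_norm power_divide)

lemma invert_invert:
  assumes "P \<noteq> f" "\<rho> \<noteq> 0"
  shows "invert f \<rho> (invert f \<rho> P) = P"
proof -
  define k where "k = \<rho>\<^sup>2 / (norm (P - f))\<^sup>2"
  have "k \<noteq> 0" "k * (norm (P - f))\<^sup>2 = \<rho>\<^sup>2"
    using assms by (simp_all add: k_def)
  moreover have "(norm (k *\<^sub>R (P - f)))\<^sup>2 = k\<^sup>2 * (norm (P - f))\<^sup>2"
    by (simp add: power_mult_distrib)
  ultimately have "\<rho>\<^sup>2 / (norm (k *\<^sub>R (P - f)))\<^sup>2 * k = 1"
    using assms(2) by (simp add: power2_eq_square field_simps)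
  moreover have "invert f \<rho> (invert f \<rho> P) = f + (\<rho>\<^sup>2 / (norm (k *\<^sub>R (P - f)))\<^sup>2 * k) *\<^sub>R (P - f)"
    by (simp add: invert_def[of f \<rho> "invert f \<rho> P"] dist_norm invert_minus_center
        k_def[symmetric] power_divide)
  ultimately show ?thesis
    by (metis add.commute diff_add_cancel scaleR_one)
qed

lemma invert_circle:
  assumes "P \<noteq> f" "dist P C = r"
  shows "((dist f C)\<^sup>2 - r\<^sup>2) * (norm (invert f \<rho> P - f))\<^sup>2
           - 2 * \<rho>\<^sup>2 * ((C - f) \<bullet> (invert f \<rho> P - f)) + \<rho>^4 = 0"
proof -
  define q Y n where "q = P - f" and "Y = C - f" and "n = (norm q)\<^sup>2"
  have "n > 0" using assms(1) by (simp add: n_def q_def)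
  have "(norm (q - Y))\<^sup>2 = r\<^sup>2"
    using assms(2) by (simp add: q_def Y_def dist_norm)
  then have circle: "n - 2 * (Y \<bullet> q) + (norm Y)\<^sup>2 - r\<^sup>2 = 0"
    unfolding n_def by (simp add: power2_norm_eq_inner inner_diff inner_commute algebra_simps)
  have "invert f \<rho> P - f = (\<rho>\<^sup>2 / n) *\<^sub>R q"
    by (simp add: invert_minus_center n_def q_def)
  then have "((norm Y)\<^sup>2 - r\<^sup>2) * (norm (invert f \<rho> P - f))\<^sup>2 - 2 * \<rho>\<^sup>2 * (Y \<bullet> (invert f \<rho> P - f)) + \<rho>^4
      = \<rho>^4 / n * (n - 2 * (Y \<bullet> q) + (norm Y)\<^sup>2 - r\<^sup>2)"
    using \<open>n > 0\<close> by (simp add: power_mult_distrib field_simps n_def)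
  then show ?thesis
    using circle by (simp add: Y_def dist_norm norm_minus_commute)
qed

lemma circumcenter_invert_circle:
  assumes "\<rho> \<noteq> 0" and "P1 \<noteq> f" "P2 \<noteq> f" "P3 \<noteq> f" and "P1 \<noteq> P2" "P1 \<noteq> P3" "P2 \<noteq> P3"
    and "dist P1 C = r" "dist P2 C = r" "dist P3 C = r"
    and "is_circumcenter X (invert f \<rho> P1) (invert f \<rho> P2) (invert f \<rho> P3)"
  shows "(dist f C)\<^sup>2 \<noteq> r\<^sup>2 \<and> X = f + (\<rho>\<^sup>2 / ((dist f C)\<^sup>2 - r\<^sup>2)) *\<^sub>R (C - f)"
proof -
  define pw Y where "pw = (dist f C)\<^sup>2 - r\<^sup>2" and "Y = C - f"
  define R1 R2 R3 where "R1 = invert f \<rho> P1" and "R2 = invert f \<rho> P2" and "R3 = invert f \<rho> P3"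
  have "R1 \<noteq> R2" "R1 \<noteq> R3" "R2 \<noteq> R3"
    using invert_invert[OF _ assms(1)] assms(2-7) unfolding R1_def R2_def R3_def by metis+
  have on_circle: "pw * (norm (R - f))\<^sup>2 - 2 * \<rho>\<^sup>2 * (Y \<bullet> (R - f)) + \<rho>^4 = 0"
    if "R \<in> {R1, R2, R3}" for R
    using that invert_circle assms(2-4,8-10) unfolding pw_def Y_def R1_def R2_def R3_def by blast
  have "pw \<noteq> 0"
  proof
    assume "pw = 0"
    have "Y \<noteq> 0"
      using \<open>pw = 0\<close> assms(2,8) by (auto simp: pw_def Y_def dist_commute)
    have level: "Y \<bullet> (R - f) = \<rho>\<^sup>2 / 2" if "R \<in> {R1, R2, R3}" for R
    proof -
      have "\<rho>\<^sup>2 * (\<rho>\<^sup>2 - 2 * (Y \<bullet> (R - f))) = 0"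
        using on_circle[OF that] \<open>pw = 0\<close> by (simp add: power4_eq_xxxx power2_eq_square algebra_simps)
      then show ?thesis using assms(1) by simp
    qed
    have "Y \<bullet> (R2 - R1) = 0" "Y \<bullet> (R3 - R1) = 0"
      using level[of R1] level[of R2] level[of R3] by (simp_all add: inner_diff_right)
    then have "det2 (R2 - R1) (R3 - R1) = 0"
      using \<open>Y \<noteq> 0\<close> by (rule perpendicular_det2_eq_0[rotated])
    then show False
      using collinear_not_circumcenter \<open>R1 \<noteq> R2\<close> \<open>R1 \<noteq> R3\<close> \<open>R2 \<noteq> R3\<close> assms(11)
      unfolding R1_def R2_def R3_def by blast
  qed
  define W where "W = f + (\<rho>\<^sup>2 / pw) *\<^sub>R Y"
  have radius: "(dist W R)\<^sup>2 = (\<rho>\<^sup>2 / pw)\<^sup>2 * (norm Y)\<^sup>2 - \<rho>^4 / pw" if "R \<in> {R1, R2, R3}" for R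
  proof -
    have "dist W R = norm ((R - f) - (\<rho>\<^sup>2 / pw) *\<^sub>R Y)"
      by (simp add: W_def dist_norm norm_minus_commute algebra_simps)
    moreover have "(norm (u - k *\<^sub>R Y))\<^sup>2 = (norm u)\<^sup>2 - 2 * k * (Y \<bullet> u) + k\<^sup>2 * (norm Y)\<^sup>2"
      for u :: "real \<times> real" and k :: real
      by (simp add: power2_norm_eq_inner inner_simps inner_commute)
        (simp add: power2_eq_square algebra_simps)
    ultimately have "(dist W R)\<^sup>2
        = (norm (R - f))\<^sup>2 - 2 * (\<rho>\<^sup>2 / pw) * (Y \<bullet> (R - f)) + (\<rho>\<^sup>2 / pw)\<^sup>2 * (norm Y)\<^sup>2"
      by simp
    also have "(norm (R - f))\<^sup>2 - 2 * (\<rho>\<^sup>2 / pw) * (Y \<bullet> (R - f)) = -(\<rho>^4 / pw)"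
    proof -
      have "pw * (2 * (\<rho>\<^sup>2 / pw) * (Y \<bullet> (R - f))) = 2 * \<rho>\<^sup>2 * (Y \<bullet> (R - f))"
        using \<open>pw \<noteq> 0\<close> by simp
      then have "pw * ((norm (R - f))\<^sup>2 - 2 * (\<rho>\<^sup>2 / pw) * (Y \<bullet> (R - f))) = -(\<rho>^4)"
        using on_circle[OF that] by (simp add: right_diff_distrib)
      then show ?thesis
        using \<open>pw \<noteq> 0\<close> by (metis minus_divide_left nonzero_mult_div_cancel_left)
    qed
    finally show ?thesis by simp
  qed
  then have "is_circumcenter W R1 R2 R3"
    unfolding is_circumcenter_def
    by (metis insertCI power2_eq_iff_nonneg zero_le_dist)
  then have "X = W"
    using is_circumcenter_unique assms(11) \<open>R1 \<noteq> R2\<close> \<open>R1 \<noteq> R3\<close> \<open>R2 \<noteq> R3\<close>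
    unfolding R1_def R2_def R3_def by blast
  then show ?thesis
    using \<open>pw \<noteq> 0\<close> by (simp add: W_def pw_def Y_def)
qed

section \<open>The confocal parameter of a chord\<close>

text \<open>\<open>(snd Q - snd P, fst P - fst Q)\<close> is a normal of the line \<open>PQ\<close>; the division
  normalises it, so this is the parameter \<open>l\<close> of the confocal conic touched by \<open>PQ\<close>.\<close>

definition confocal_param :: "real \<Rightarrow> real \<Rightarrow> real \<times> real \<Rightarrow> real \<times> real \<Rightarrow> real" where
  "confocal_param a b P Q =
     (a\<^sup>2 * (snd Q - snd P)\<^sup>2 + b\<^sup>2 * (fst P - fst Q)\<^sup>2
        - ((snd Q - snd P) * fst P + (fst P - fst Q) * snd P)\<^sup>2)
       / ((snd Q - snd P)\<^sup>2 + (fst P - fst Q)\<^sup>2)"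

lemma confocal_param_commute: "confocal_param a b P Q = confocal_param a b Q P"
proof -
  have "((snd Q - snd P) * fst P + (fst P - fst Q) * snd P)\<^sup>2
      = ((snd P - snd Q) * fst Q + (fst Q - fst P) * snd Q)\<^sup>2"
    by (simp add: power2_eq_square algebra_simps)
  then show ?thesis
    unfolding confocal_param_def by (simp add: power2_commute)
qed

lemma confocal_param_normal:
  assumes "a > 0" "b > 0" "on_ellipse a b P" "Q \<noteq> P"
  shows "confocal_param a b P Q
           = (a\<^sup>2 + b\<^sup>2 - (norm P)\<^sup>2) / (norm (ellipse_normal a b P))\<^sup>2
             * (((Q - P) \<bullet> ellipse_normal a b P) / norm (Q - P))\<^sup>2"
proof -
  obtain x y xq yq where P: "P = (x, y)" and Q: "Q = (xq, yq)"
    by (cases P, cases Q)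
  have e: "b\<^sup>2 * x\<^sup>2 + a\<^sup>2 * y\<^sup>2 = a\<^sup>2 * b\<^sup>2"
    using assms(1-3) by (simp add: P on_ellipse_def field_simps)
  define D where "D = (yq - y)\<^sup>2 + (x - xq)\<^sup>2"
  define N where "N = (x / a\<^sup>2)\<^sup>2 + (y / b\<^sup>2)\<^sup>2"
  have "D > 0"
    using assms(4) by (auto simp: P Q D_def sum_power2_gt_zero_iff)
  have "x \<noteq> 0 \<or> y \<noteq> 0"
    using assms(3) by (auto simp: P on_ellipse_def)
  then have "N > 0"
    using assms(1,2) by (auto simp: N_def sum_power2_gt_zero_iff)
  define S where "S = (xq - x) * (x / a\<^sup>2) + (yq - y) * (y / b\<^sup>2)"
  define K where "K = a\<^sup>2 + b\<^sup>2 - x\<^sup>2 - y\<^sup>2"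
  define M where "M = a\<^sup>2 * (yq - y)\<^sup>2 + b\<^sup>2 * (x - xq)\<^sup>2 - ((yq - y) * x + (x - xq) * y)\<^sup>2"
  have "M * N = K * S\<^sup>2"
    using assms(1,2) e unfolding M_def N_def K_def S_def by (simp add: field_simps) algebra
  then have "M / D = K / N * (S\<^sup>2 / D)"
    using \<open>D > 0\<close> \<open>N > 0\<close> by (simp add: field_simps)
  moreover have "confocal_param a b P Q = M / D"
    by (simp add: confocal_param_def P Q M_def D_def)
  moreover have "(norm (Q - P))\<^sup>2 = D" "(norm P)\<^sup>2 = x\<^sup>2 + y\<^sup>2"
    "(norm (ellipse_normal a b P))\<^sup>2 = N" "(Q - P) \<bullet> ellipse_normal a b P = S"
    by (simp_all add: P Q D_def N_def S_def norm_Pair ellipse_normal_def inner_Pair power2_commute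
        add.commute power_divide)
  ultimately show ?thesis
    by (simp add: power_divide K_def)
qed

lemma normal_bisects_confocal_param:
  assumes "a > 0" "b > 0" "on_ellipse a b P" "Q \<noteq> P" "R \<noteq> P" "normal_bisects a b P Q R"
  shows "confocal_param a b P Q = confocal_param a b P R"
  using assms by (simp add: confocal_param_normal normal_bisects_def)

lemma three_periodic_confocal_param:
  assumes "a > 0" "b > 0" "three_periodic a b P1 P2 P3"
  shows "confocal_param a b P1 P3 = confocal_param a b P1 P2"
    and "confocal_param a b P2 P3 = confocal_param a b P1 P2"
  using assms normal_bisects_confocal_param[of a b P1 P2 P3]
    normal_bisects_confocal_param[of a b P2 P3 P1]
  by (auto simp: three_periodic_def confocal_param_commute[of a b P2 P1])

lemma confocal_param_nonneg:
  assumes "a > 0" "b > 0" "on_ellipse a b P" "Q \<noteq> P"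
  shows "confocal_param a b P Q \<ge> 0"
proof -
  have "(fst P)\<^sup>2 / a\<^sup>2 \<le> 1" "(snd P)\<^sup>2 / b\<^sup>2 \<le> 1"
    using assms(3) unfolding on_ellipse_def by (smt (verit) zero_le_divide_iff zero_le_power2)+
  then have "(norm P)\<^sup>2 \<le> a\<^sup>2 + b\<^sup>2"
    using assms(1,2) by (cases P) (simp add: norm_Pair divide_le_eq_1)
  then show ?thesis
    using assms by (simp add: confocal_param_normal)
qed

definition eccentric :: "real \<Rightarrow> real \<Rightarrow> real \<times> real \<Rightarrow> complex" where
  "eccentric a b P = Complex (fst P / a) (snd P / b)"

lemma eccentric_eq_iff:
  assumes "a \<noteq> 0" "b \<noteq> 0"
  shows "eccentric a b P = eccentric a b Q \<longleftrightarrow> P = Q"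
  using assms by (auto simp: eccentric_def complex_eq_iff prod_eq_iff)

lemma eccentric_on_ellipse:
  assumes "a > 0" "b > 0" "on_ellipse a b P"
  defines "z \<equiv> eccentric a b P"
  shows "z \<noteq> 0" "inverse z = cnj z"
    and "complex_of_real (fst P) = a * (z + inverse z) / 2"
    and "\<i> * complex_of_real (snd P) = b * (z - inverse z) / 2"
proof -
  have "(Re z)\<^sup>2 + (Im z)\<^sup>2 = 1"
    using assms(3) by (simp add: z_def eccentric_def on_ellipse_def power_divide)
  then have "z * cnj z = 1"
    by (simp add: complex_mult_cnj)
  then show inv: "inverse z = cnj z" and "z \<noteq> 0"
    by (auto intro: inverse_unique)
  show "complex_of_real (fst P) = a * (z + inverse z) / 2"
    using assms(1) unfolding inv complex_add_cnj by (simp add: z_def eccentric_def)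
  show "\<i> * complex_of_real (snd P) = b * (z - inverse z) / 2"
    using assms(2) unfolding inv complex_diff_cnj by (simp add: z_def eccentric_def)
qed

lemma confocal_chord_identity:
  fixes z z' w w' X Y Xq Yq a b :: complex
  assumes "z * z' = 1" "w * w' = 1"
    and "2 * X = a * (z + z')" "2 * Y = b * (z - z')" "2 * Xq = a * (w + w')" "2 * Yq = b * (w - w')"
  shows "(- (a\<^sup>2) * (Yq - Y)\<^sup>2 + b\<^sup>2 * (X - Xq)\<^sup>2 + (Yq * X - Xq * Y)\<^sup>2)
           * (2 * (b\<^sup>2 + a\<^sup>2) * (z * w) + (b\<^sup>2 - a\<^sup>2) * ((z * w)\<^sup>2 + 1))
         = - ((z - w)\<^sup>2 * (- ((Yq - Y)\<^sup>2) + (X - Xq)\<^sup>2) * a\<^sup>2 * b\<^sup>2)"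
  using assms by algebra

lemma confocal_param_eccentric:
  assumes "a > 0" "b > 0" "on_ellipse a b P" "on_ellipse a b Q" "Q \<noteq> P"
  defines "z \<equiv> eccentric a b P" and "w \<equiv> eccentric a b Q" and "l \<equiv> confocal_param a b P Q"
  shows "(z - w)\<^sup>2 + complex_of_real (l * (1 / a\<^sup>2 - 1 / b\<^sup>2)) * ((z * w)\<^sup>2 + 1)
           + 2 * complex_of_real (l * (1 / a\<^sup>2 + 1 / b\<^sup>2)) * z * w = 0"
proof -
  obtain x y xq yq where P: "P = (x, y)" and Q: "Q = (xq, yq)"
    by (cases P, cases Q)
  note zP = eccentric_on_ellipse[OF assms(1-3), folded z_def]
  note wQ = eccentric_on_ellipse[OF assms(1,2,4), folded w_def]
  define D where "D = (yq - y)\<^sup>2 + (x - xq)\<^sup>2"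
  define M where "M = a\<^sup>2 * (yq - y)\<^sup>2 + b\<^sup>2 * (x - xq)\<^sup>2 - ((yq - y) * x + (x - xq) * y)\<^sup>2"
  have "D \<noteq> 0"
    using assms(5) by (auto simp: P Q D_def sum_power2_eq_zero_iff)
  then have lD: "l * D = M"
    by (simp add: l_def confocal_param_def P Q D_def M_def)
  define X Y Xq Yq where "X = complex_of_real x" and "Y = \<i> * complex_of_real y"
    and "Xq = complex_of_real xq" and "Yq = \<i> * complex_of_real yq"
  define A2 B2 where "A2 = (complex_of_real a)\<^sup>2" and "B2 = (complex_of_real b)\<^sup>2"
  define E where "E = complex_of_real l * (2 * (B2 + A2) * (z * w) + (B2 - A2) * ((z * w)\<^sup>2 + 1))
                     + (z - w)\<^sup>2 * A2 * B2"
  have M_complex: "complex_of_real M = - A2 * (Yq - Y)\<^sup>2 + B2 * (X - Xq)\<^sup>2 + (Yq * X - Xq * Y)\<^sup>2"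
    by (simp add: M_def A2_def B2_def X_def Y_def Xq_def Yq_def power2_eq_square algebra_simps)
  have D_complex: "complex_of_real D = - ((Yq - Y)\<^sup>2) + (X - Xq)\<^sup>2"
    by (simp add: D_def X_def Y_def Xq_def Yq_def power2_eq_square algebra_simps)
  have "z * inverse z = 1" "w * inverse w = 1"
    using zP(1) wQ(1) by simp_all
  moreover have "2 * X = a * (z + inverse z)" "2 * Y = b * (z - inverse z)"
    "2 * Xq = a * (w + inverse w)" "2 * Yq = b * (w - inverse w)"
    using zP(3,4) wQ(3,4) by (simp_all add: P Q X_def Y_def Xq_def Yq_def mult.commute)
  ultimately have "complex_of_real M * (2 * (B2 + A2) * (z * w) + (B2 - A2) * ((z * w)\<^sup>2 + 1))
      = - ((z - w)\<^sup>2 * complex_of_real D * A2 * B2)"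
    unfolding M_complex D_complex A2_def B2_def by (rule confocal_chord_identity)
  then have "complex_of_real D * E = 0"
    unfolding E_def lD[symmetric] by (simp add: algebra_simps)
  then have "E = 0"
    using \<open>D \<noteq> 0\<close> by simp
  moreover have "(z - w)\<^sup>2 + complex_of_real (l * (1 / a\<^sup>2 - 1 / b\<^sup>2)) * ((z * w)\<^sup>2 + 1)
      + 2 * complex_of_real (l * (1 / a\<^sup>2 + 1 / b\<^sup>2)) * z * w = E / (A2 * B2)"
    using assms(1,2) unfolding E_def A2_def B2_def
    by (simp add: field_simps) (auto simp: algebra_simps eval_nat_numeral)
  ultimately show ?thesis
    by simp
qed

section \<open>Poncelet closure for triangles\<close>

lemma poncelet_elimination:
  fixes z1 z2 z3 t q :: complex
  assumes R12: "(z1 - z2)\<^sup>2 + t * ((z1 * z2)\<^sup>2 + 1) + 2 * q * z1 * z2 = 0"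
    and R13: "(z1 - z3)\<^sup>2 + t * ((z1 * z3)\<^sup>2 + 1) + 2 * q * z1 * z3 = 0"
    and R23: "(z2 - z3)\<^sup>2 + t * ((z2 * z3)\<^sup>2 + 1) + 2 * q * z2 * z3 = 0"
    and "z2 \<noteq> z3"
  shows "(1 + t * z1\<^sup>2) * (z2 + z3) + 2 * z1 * (q - 1) = 0"
    and "(1 + t * z1\<^sup>2) * (z2 * z3) = z1\<^sup>2 + t"
    and "(3 - 2 * q - t\<^sup>2) * (t * (1 + z1 ^ 4) + 2 * q * z1\<^sup>2) = 0"
proof -
  define A B C where "A = 1 + t * z1\<^sup>2" and "B = 2 * z1 * (q - 1)" and "C = z1\<^sup>2 + t"
  \<comment> \<open>z2 and z3 are the two roots of the quadratic A z^2 + B z + C\<close>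
  have "A * z2\<^sup>2 + B * z2 + C = 0" "A * z3\<^sup>2 + B * z3 + C = 0"
    using R12 R13 unfolding A_def B_def C_def by (simp_all add: algebra_simps power2_eq_square)
  then have "(z2 - z3) * (A * (z2 + z3) + B) = 0"
    by (simp add: algebra_simps power2_eq_square)
      (metis add.commute add_diff_cancel_left diff_add_cancel)
  then have S: "A * (z2 + z3) = - B"
    using \<open>z2 \<noteq> z3\<close> by (simp add: eq_neg_iff_add_eq_0)
  then show "(1 + t * z1\<^sup>2) * (z2 + z3) + 2 * z1 * (q - 1) = 0"
    by (simp add: A_def B_def)
  have P: "A * (z2 * z3) = C"
    using \<open>A * z2\<^sup>2 + B * z2 + C = 0\<close> S by algebra
  then show "(1 + t * z1\<^sup>2) * (z2 * z3) = z1\<^sup>2 + t"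
    by (simp add: A_def C_def)
  have "A\<^sup>2 * ((z2 - z3)\<^sup>2 + t * ((z2 * z3)\<^sup>2 + 1) + 2 * q * z2 * z3) = 0"
    using R23 by simp
  then have "(A * (z2 + z3))\<^sup>2 - 4 * A * (A * (z2 * z3)) + t * ((A * (z2 * z3))\<^sup>2 + A\<^sup>2)
      + 2 * q * A * (A * (z2 * z3)) = 0"
    by (simp add: algebra_simps power2_eq_square)
  then have "B\<^sup>2 - 4 * A * C + t * (C\<^sup>2 + A\<^sup>2) + 2 * q * A * C = 0"
    unfolding S P by simp
  then show "(3 - 2 * q - t\<^sup>2) * (t * (1 + z1 ^ 4) + 2 * q * z1\<^sup>2) = 0"
    unfolding A_def B_def C_def by algebra
qed

lemma unit_circle_nonvanishing:
  fixes z :: complex and t q :: real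
  assumes "inverse z = cnj z" "z \<noteq> 0" "\<bar>t\<bar> < q"
  shows "complex_of_real t * (1 + z ^ 4) + 2 * complex_of_real q * z\<^sup>2 \<noteq> 0"
proof
  assume H: "complex_of_real t * (1 + z ^ 4) + 2 * complex_of_real q * z\<^sup>2 = 0"
  define w where "w = z\<^sup>2"
  have w1: "w * cnj w = 1"
    using assms(1,2) unfolding w_def
    by (metis complex_cnj_power power_mult_distrib right_inverse power_one)
  have "cnj w * (complex_of_real t * (1 + w\<^sup>2) + 2 * complex_of_real q * w) = 0"
    using H unfolding w_def by (simp add: power_mult[symmetric])
  then have "complex_of_real t * (cnj w + w * (w * cnj w)) + 2 * complex_of_real q * (w * cnj w) = 0"
    by (simp add: algebra_simps power2_eq_square)
  then have "complex_of_real (t * (2 * Re w) + 2 * q) = 0"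
    unfolding w1 by (simp add: algebra_simps complex_add_cnj)
  then have "t * Re w = - q"
    by (simp only: of_real_eq_0_iff)
  moreover have "cmod w = 1"
    using w1 complex_mod_mult_cnj[of w] norm_ge_zero[of w] by (auto simp: power2_eq_1_iff)
  then have "\<bar>t * Re w\<bar> \<le> \<bar>t\<bar>"
    using abs_Re_le_cmod[of w] by (simp add: abs_mult mult_left_le)
  ultimately show False
    using assms(3) by simp
qed

lemma poncelet_closure:
  fixes z1 z2 z3 :: complex and t q :: real
  assumes "inverse z1 = cnj z1" "z1 \<noteq> 0" "z2 \<noteq> z3" "\<bar>t\<bar> < q"
    and "(z1 - z2)\<^sup>2 + complex_of_real t * ((z1 * z2)\<^sup>2 + 1) + 2 * complex_of_real q * z1 * z2 = 0"
    and "(z1 - z3)\<^sup>2 + complex_of_real t * ((z1 * z3)\<^sup>2 + 1) + 2 * complex_of_real q * z1 * z3 = 0"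
    and "(z2 - z3)\<^sup>2 + complex_of_real t * ((z2 * z3)\<^sup>2 + 1) + 2 * complex_of_real q * z2 * z3 = 0"
  shows "t\<^sup>2 + 2 * q = 3"
    and "1 + complex_of_real t * z1\<^sup>2 \<noteq> 0"
    and "z2 + z3 = - z1 * (1 - (complex_of_real t)\<^sup>2) / (1 + complex_of_real t * z1\<^sup>2)"
    and "z2 * z3 = (z1\<^sup>2 + complex_of_real t) / (1 + complex_of_real t * z1\<^sup>2)"
proof -
  note elim = poncelet_elimination[OF assms(5-7,3)]
  define T where "T = complex_of_real t"
  have "3 - 2 * complex_of_real q - T\<^sup>2 = 0"
    using elim(3) unit_circle_nonvanishing[OF assms(1,2,4)] by (simp add: T_def)
  then have "complex_of_real (t\<^sup>2 + 2 * q) = complex_of_real 3"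
    by (simp add: T_def algebra_simps)
  then show closure: "t\<^sup>2 + 2 * q = 3"
    by (simp only: of_real_eq_iff)
  show "1 + complex_of_real t * z1\<^sup>2 \<noteq> 0"
  proof
    assume "1 + complex_of_real t * z1\<^sup>2 = 0"
    then have "z1 * (complex_of_real q - 1) = 0" "z1\<^sup>2 + T = 0" "T * z1\<^sup>2 = -1"
      using elim(1,2) by (simp_all add: T_def algebra_simps eq_neg_iff_add_eq_0)
    then have "q = 1" "z1\<^sup>2 = - T"
      using assms(2) by (simp_all add: eq_neg_iff_add_eq_0)
    then have "q = 1" "T\<^sup>2 = 1"
      using \<open>T * z1\<^sup>2 = -1\<close> by (simp_all add: power2_eq_square)
    then show False
      using assms(4) by (auto simp: T_def power2_eq_1_iff simp flip: of_real_power)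
  qed
  have E: "2 * z1 * (complex_of_real q - 1) = z1 * (1 - T\<^sup>2)"
  proof -
    have "2 * q = 3 - t\<^sup>2"
      using closure by simp
    then have "complex_of_real (2 * q) = complex_of_real (3 - t\<^sup>2)"
      by simp
    then have "2 * complex_of_real q = 3 - T\<^sup>2"
      by (simp add: T_def)
    then show ?thesis by algebra
  qed
  have "(1 + T * z1\<^sup>2) * (z2 + z3) + z1 * (1 - T\<^sup>2) = 0"
    using elim(1)[folded T_def] by (simp only: E[symmetric])
  then have "(1 + T * z1\<^sup>2) * (z2 + z3) = - z1 * (1 - T\<^sup>2)"
    by algebra
  with \<open>1 + complex_of_real t * z1\<^sup>2 \<noteq> 0\<close>
  show "z2 + z3 = - z1 * (1 - (complex_of_real t)\<^sup>2) / (1 + complex_of_real t * z1\<^sup>2)"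
    unfolding T_def by (metis nonzero_mult_div_cancel_left)
  show "z2 * z3 = (z1\<^sup>2 + complex_of_real t) / (1 + complex_of_real t * z1\<^sup>2)"
    using elim(2) \<open>1 + complex_of_real t * z1\<^sup>2 \<noteq> 0\<close> by (metis nonzero_mult_div_cancel_left)
qed

lemma poncelet_symmetric_functions:
  fixes z1 z2 z3 T :: complex
  assumes "z1 \<noteq> 0" "z2 \<noteq> 0" "z3 \<noteq> 0" "1 + T * z1\<^sup>2 \<noteq> 0"
    and sum: "z2 + z3 = - z1 * (1 - T\<^sup>2) / (1 + T * z1\<^sup>2)"
    and prod: "z2 * z3 = (z1\<^sup>2 + T) / (1 + T * z1\<^sup>2)"
  defines "w \<equiv> 1 / (z1 * z2 * z3)"
  defines "s1 \<equiv> z1 + z2 + z3 + w"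
    and "s2 \<equiv> z1 * z2 + z1 * z3 + z1 * w + z2 * z3 + z2 * w + z3 * w"
    and "s3 \<equiv> z1 * z2 * z3 + z1 * z2 * w + z1 * z3 * w + z2 * z3 * w"
  shows "s2 = 2 * T"
    and "(s1 + s3)\<^sup>2 * (1 - T)\<^sup>2 - (s1 - s3)\<^sup>2 * (1 + T)\<^sup>2 = 4 * (1 + T)\<^sup>2 * (1 - T)\<^sup>2"
proof -
  define A C where "A = 1 + T * z1\<^sup>2" and "C = z1\<^sup>2 + T"
  have "A \<noteq> 0" using assms(4) by (simp add: A_def)
  moreover have "C \<noteq> 0"
    using prod assms(2,3) by (auto simp: C_def)
  ultimately have "z1 * (A * C) \<noteq> 0" using assms(1) by simp
  have S: "z2 + z3 = - z1 * (1 - T\<^sup>2) / A" and P: "z2 * z3 = C / A"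
    using sum prod by (simp_all add: A_def C_def)
  have "s1 = z1 + (z2 + z3) + 1 / (z1 * (z2 * z3))"
    and "s2 = z1 * (z2 + z3) + z2 * z3 + (z1 + (z2 + z3)) / (z1 * (z2 * z3))"
    and "s3 = z1 * (z2 * z3) + (z2 + z3) / (z2 * z3) + 1 / z1"
    using assms(1-3) by (simp_all add: s1_def s2_def s3_def w_def field_simps)
  then have s1: "s1 = (1 + T * (2 + T\<^sup>2) * z1\<^sup>2 + 3 * T\<^sup>2 * z1 ^ 4 + T * z1 ^ 6) / (z1 * (A * C))"
    and s2: "s2 = z1 * (- z1 * (1 - T\<^sup>2) / A) + C / A + (z1 + (- z1 * (1 - T\<^sup>2) / A)) / (z1 * (C / A))"
    and s3: "s3 = (z1 ^ 6 + T * (2 + T\<^sup>2) * z1 ^ 4 + 3 * T\<^sup>2 * z1\<^sup>2 + T) / (z1 * (A * C))"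
    unfolding S P using \<open>A \<noteq> 0\<close> \<open>C \<noteq> 0\<close> assms(1)
    by (simp_all add: field_simps)
      (simp_all add: A_def C_def algebra_simps power2_eq_square power4_eq_xxxx eval_nat_numeral)
  have "z1 * (- z1 * (1 - T\<^sup>2) / A) + C / A = T"
    using \<open>A \<noteq> 0\<close> by (simp add: field_simps) (simp add: A_def C_def algebra_simps power2_eq_square)
  moreover have "(z1 + (- z1 * (1 - T\<^sup>2) / A)) / (z1 * (C / A)) = T"
    using \<open>A \<noteq> 0\<close> \<open>C \<noteq> 0\<close> assms(1)
    by (simp add: field_simps) (simp add: A_def C_def algebra_simps power2_eq_square)
  ultimately show "s2 = 2 * T"
    unfolding s2 by simp
  define F1 F2 where "F1 = (1 + z1\<^sup>2) * (z1 ^ 4 + (T\<^sup>2 + 2 * T - 1) * z1\<^sup>2 + 1)"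
    and "F2 = (1 - z1\<^sup>2) * (z1 ^ 4 + (1 + 2 * T - T\<^sup>2) * z1\<^sup>2 + 1)"
  define G where "G = z1 * (A * C)"
  have "(1 + T * (2 + T\<^sup>2) * z1\<^sup>2 + 3 * T\<^sup>2 * z1 ^ 4 + T * z1 ^ 6)
      + (z1 ^ 6 + T * (2 + T\<^sup>2) * z1 ^ 4 + 3 * T\<^sup>2 * z1\<^sup>2 + T) = (1 + T) * F1"
    "(1 + T * (2 + T\<^sup>2) * z1\<^sup>2 + 3 * T\<^sup>2 * z1 ^ 4 + T * z1 ^ 6)
      - (z1 ^ 6 + T * (2 + T\<^sup>2) * z1 ^ 4 + 3 * T\<^sup>2 * z1\<^sup>2 + T) = (1 - T) * F2"
    unfolding F1_def F2_def by algebra+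
  then have "s1 + s3 = (1 + T) * F1 / G" "s1 - s3 = (1 - T) * F2 / G"
    unfolding s1 s3 G_def[symmetric]
    by (simp_all only: add_divide_distrib[symmetric] diff_divide_distrib[symmetric])
  moreover have "F1\<^sup>2 - F2\<^sup>2 = 4 * G\<^sup>2"
    unfolding F1_def F2_def G_def A_def C_def by algebra
  moreover have "((1 + T) * F1 / G)\<^sup>2 * (1 - T)\<^sup>2 - ((1 - T) * F2 / G)\<^sup>2 * (1 + T)\<^sup>2
      = (1 + T)\<^sup>2 * (1 - T)\<^sup>2 * (F1\<^sup>2 - F2\<^sup>2) / G\<^sup>2"
    using \<open>z1 * (A * C) \<noteq> 0\<close> by (simp add: G_def power_divide power_mult_distrib field_simps) algebra
  ultimately show "(s1 + s3)\<^sup>2 * (1 - T)\<^sup>2 - (s1 - s3)\<^sup>2 * (1 + T)\<^sup>2 = 4 * (1 + T)\<^sup>2 * (1 - T)\<^sup>2"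
    using \<open>z1 * (A * C) \<noteq> 0\<close> by (simp add: G_def)
qed

section \<open>The circumcircle of a 3-periodic\<close>

lemma delta_bounds:
  fixes a b :: real
  assumes "a > b" "b > 0"
  defines "\<delta> \<equiv> sqrt (a ^ 4 - a\<^sup>2 * b\<^sup>2 + b ^ 4)"
  shows "\<delta>\<^sup>2 = a ^ 4 - a\<^sup>2 * b\<^sup>2 + b ^ 4" and "b\<^sup>2 < \<delta>" and "\<delta> < a\<^sup>2"
proof -
  have "a\<^sup>2 - b\<^sup>2 > 0" "a\<^sup>2 > 0" "b\<^sup>2 > 0"
    using assms(1,2) by (simp_all add: power_strict_mono)
  then have "a\<^sup>2 * (a\<^sup>2 - b\<^sup>2) > 0" "b\<^sup>2 * (a\<^sup>2 - b\<^sup>2) > 0"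
    by simp_all
  moreover have "a ^ 4 - a\<^sup>2 * b\<^sup>2 + b ^ 4 = (b\<^sup>2)\<^sup>2 + a\<^sup>2 * (a\<^sup>2 - b\<^sup>2)"
    "a ^ 4 - a\<^sup>2 * b\<^sup>2 + b ^ 4 = (a\<^sup>2)\<^sup>2 - b\<^sup>2 * (a\<^sup>2 - b\<^sup>2)"
    by (simp_all add: power2_eq_square power4_eq_xxxx algebra_simps)
  ultimately have "(b\<^sup>2)\<^sup>2 < a ^ 4 - a\<^sup>2 * b\<^sup>2 + b ^ 4" "a ^ 4 - a\<^sup>2 * b\<^sup>2 + b ^ 4 < (a\<^sup>2)\<^sup>2"
    by linarith+
  then have "sqrt ((b\<^sup>2)\<^sup>2) < \<delta>" "\<delta> < sqrt ((a\<^sup>2)\<^sup>2)"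
    unfolding \<delta>_def by (simp_all only: real_sqrt_less_mono)
  moreover have "sqrt ((b\<^sup>2)\<^sup>2) = b\<^sup>2" "sqrt ((a\<^sup>2)\<^sup>2) = a\<^sup>2"
    by (simp_all only: real_sqrt_abs abs_power2)
  ultimately show "b\<^sup>2 < \<delta>" "\<delta> < a\<^sup>2"
    by simp_all
  show "\<delta>\<^sup>2 = a ^ 4 - a\<^sup>2 * b\<^sup>2 + b ^ 4"
    unfolding \<delta>_def using \<open>(b\<^sup>2)\<^sup>2 < a ^ 4 - a\<^sup>2 * b\<^sup>2 + b ^ 4\<close> by simp
qed

lemma caustic_closure:
  fixes a b l t q :: real
  assumes "a > b" "b > 0" "l > 0"
    and t: "t = l * (1 / a\<^sup>2 - 1 / b\<^sup>2)" and q: "q = l * (1 / a\<^sup>2 + 1 / b\<^sup>2)"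
    and closure: "t\<^sup>2 + 2 * q = 3"
  defines "\<delta> \<equiv> sqrt (a ^ 4 - a\<^sup>2 * b\<^sup>2 + b ^ 4)"
  shows "(a\<^sup>2 - b\<^sup>2) * t = a\<^sup>2 + b\<^sup>2 - 2 * \<delta>"
proof -
  note \<delta> = delta_bounds[OF assms(1,2), folded \<delta>_def]
  have "a > 0" using assms(1,2) by simp
  have "(a\<^sup>2 - b\<^sup>2) * q = - t * (a\<^sup>2 + b\<^sup>2)"
    unfolding t q using \<open>a > 0\<close> assms(2) by (simp add: field_simps)
  then have "((a\<^sup>2 - b\<^sup>2) * t - (a\<^sup>2 + b\<^sup>2))\<^sup>2 = (a\<^sup>2 + b\<^sup>2)\<^sup>2 + 3 * (a\<^sup>2 - b\<^sup>2)\<^sup>2"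
    using closure by algebra
  also have "\<dots> = (2 * \<delta>)\<^sup>2"
    using \<delta>(1) by (simp add: power2_eq_square power4_eq_xxxx algebra_simps)
  finally have sq: "((a\<^sup>2 - b\<^sup>2) * t - (a\<^sup>2 + b\<^sup>2))\<^sup>2 = (2 * \<delta>)\<^sup>2" .
  have "1 / a\<^sup>2 < 1 / b\<^sup>2"
    using assms(1,2) by (simp add: divide_strict_left_mono power_strict_mono)
  then have "t < 0"
    unfolding t using assms(3) by (simp add: mult_pos_neg)
  moreover have "a\<^sup>2 - b\<^sup>2 > 0" "a\<^sup>2 + b\<^sup>2 > 0"
    using assms(1,2) by (simp_all add: power_strict_mono add_pos_pos)
  ultimately have "(a\<^sup>2 - b\<^sup>2) * t - (a\<^sup>2 + b\<^sup>2) < 0"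
    using mult_pos_neg[of "a\<^sup>2 - b\<^sup>2" t] by linarith
  moreover have "\<delta> \<ge> 0"
    using \<delta>(2) by (smt (verit) zero_le_power2)
  ultimately have "(a\<^sup>2 - b\<^sup>2) * t - (a\<^sup>2 + b\<^sup>2) = - (2 * \<delta>)"
    using sq by (smt (verit) power2_eq_iff)
  then show ?thesis by simp
qed

lemma three_periodic_poncelet:
  assumes "a > b" "b > 0" "three_periodic a b P1 P2 P3"
  defines "z1 \<equiv> eccentric a b P1" and "z2 \<equiv> eccentric a b P2" and "z3 \<equiv> eccentric a b P3"
    and "\<delta> \<equiv> sqrt (a ^ 4 - a\<^sup>2 * b\<^sup>2 + b ^ 4)"
  obtains t :: real
  where "(a\<^sup>2 - b\<^sup>2) * t = a\<^sup>2 + b\<^sup>2 - 2 * \<delta>"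
    and "1 + complex_of_real t * z1\<^sup>2 \<noteq> 0"
    and "z2 + z3 = - z1 * (1 - (complex_of_real t)\<^sup>2) / (1 + complex_of_real t * z1\<^sup>2)"
    and "z2 * z3 = (z1\<^sup>2 + complex_of_real t) / (1 + complex_of_real t * z1\<^sup>2)"
proof -
  have "a > 0" using assms(1,2) by simp
  have on: "on_ellipse a b P1" "on_ellipse a b P2" "on_ellipse a b P3"
    and "P1 \<noteq> P2" "P2 \<noteq> P3" "P1 \<noteq> P3"
    using assms(3) by (simp_all add: three_periodic_def)
  define l where "l = confocal_param a b P1 P2"
  note same_l = three_periodic_confocal_param[OF \<open>a > 0\<close> assms(2,3), folded l_def]
  define t q where "t = l * (1 / a\<^sup>2 - 1 / b\<^sup>2)" and "q = l * (1 / a\<^sup>2 + 1 / b\<^sup>2)"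
  have rel: "(z - w)\<^sup>2 + complex_of_real t * ((z * w)\<^sup>2 + 1) + 2 * complex_of_real q * z * w = 0"
    if "(P, Q) \<in> {(P1, P2), (P1, P3), (P2, P3)}" "z = eccentric a b P" "w = eccentric a b Q" for P Q z w
    using that confocal_param_eccentric[OF \<open>a > 0\<close> assms(2), of P Q] on same_l
      \<open>P1 \<noteq> P2\<close> \<open>P2 \<noteq> P3\<close> \<open>P1 \<noteq> P3\<close>
    by (auto simp: t_def q_def l_def)
  have "z1 \<noteq> z2" "z2 \<noteq> z3"
    using eccentric_eq_iff[of a b] \<open>a > 0\<close> assms(2) \<open>P1 \<noteq> P2\<close> \<open>P2 \<noteq> P3\<close>
    by (simp_all add: z1_def z2_def z3_def)
  have "l \<noteq> 0"
  proof
    assume "l = 0"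
    then show False
      using rel[of P1 P2 z1 z2] \<open>z1 \<noteq> z2\<close> by (simp add: t_def q_def z1_def z2_def)
  qed
  moreover have "l \<ge> 0"
    using confocal_param_nonneg[OF \<open>a > 0\<close> assms(2) on(1)] \<open>P1 \<noteq> P2\<close> by (simp add: l_def)
  ultimately have "l > 0" by simp
  then have "\<bar>t\<bar> < q"
    using \<open>a > 0\<close> assms(2) by (simp add: t_def q_def abs_less_iff algebra_simps)
  note z1 = eccentric_on_ellipse[OF \<open>a > 0\<close> assms(2) on(1), folded z1_def]
  note closure = poncelet_closure[OF z1(2,1) \<open>z2 \<noteq> z3\<close> \<open>\<bar>t\<bar> < q\<close>
      rel[of P1 P2 z1 z2] rel[of P1 P3 z1 z3] rel[of P2 P3 z2 z3]]
  show thesis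
    using that caustic_closure[OF assms(1,2) \<open>l > 0\<close> t_def q_def] closure
    by (simp add: z1_def z2_def z3_def \<delta>_def)
qed

lemma ellipse_circle_quartic:
  fixes a b x y U V \<delta> :: real and z s1 s2 s3 :: complex
  assumes "z \<noteq> 0" "a \<noteq> 0" "b \<noteq> 0"
    and x: "complex_of_real x = a * (z + inverse z) / 2"
    and y: "\<i> * complex_of_real y = b * (z - inverse z) / 2"
    and U: "2 * complex_of_real U = s1 + s3" and V: "2 * \<i> * complex_of_real V = s1 - s3"
    and s2: "complex_of_real (- 4 * \<delta>) = ((complex_of_real a)\<^sup>2 - (complex_of_real b)\<^sup>2) * s2
                                    - 2 * ((complex_of_real a)\<^sup>2 + (complex_of_real b)\<^sup>2)"
  shows "complex_of_real (x\<^sup>2 + y\<^sup>2 - 2 * ((a\<^sup>2 - b\<^sup>2) * U / (4 * a)) * x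
                          + 2 * ((a\<^sup>2 - b\<^sup>2) * V / (4 * b)) * y - \<delta>)
         = ((complex_of_real a)\<^sup>2 - (complex_of_real b)\<^sup>2)
             * (z ^ 4 - s1 * z ^ 3 + s2 * z\<^sup>2 - s3 * z + 1) / (4 * z\<^sup>2)"
proof -
  define Y W where "Y = \<i> * complex_of_real y" and "W = \<i> * complex_of_real V"
  have "complex_of_real (x\<^sup>2 + y\<^sup>2 - 2 * ((a\<^sup>2 - b\<^sup>2) * U / (4 * a)) * x
                          + 2 * ((a\<^sup>2 - b\<^sup>2) * V / (4 * b)) * y - \<delta>)
      = (complex_of_real x)\<^sup>2 - Y\<^sup>2
        - ((complex_of_real a)\<^sup>2 - (complex_of_real b)\<^sup>2) * (2 * complex_of_real U)
            * complex_of_real x / (4 * complex_of_real a)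
        - ((complex_of_real a)\<^sup>2 - (complex_of_real b)\<^sup>2) * (2 * W) * Y / (4 * complex_of_real b)
        + complex_of_real (- 4 * \<delta>) / 4"
    using assms(2,3) by (simp add: Y_def W_def field_simps power2_eq_square)
  also have "\<dots> = ((complex_of_real a)\<^sup>2 - (complex_of_real b)\<^sup>2)
             * (z ^ 4 - s1 * z ^ 3 + s2 * z\<^sup>2 - s3 * z + 1) / (4 * z\<^sup>2)"
    unfolding x y[folded Y_def] U V[unfolded mult.assoc, folded W_def] s2
    using assms(1-3)
    by (simp add: field_simps) (simp add: power2_eq_square algebra_simps eval_nat_numeral)
  finally show ?thesis .
qed

lemma three_periodic_circumcircle:
  assumes "a > b" "b > 0" "three_periodic a b P1 P2 P3"
  defines "\<delta> \<equiv> sqrt (a ^ 4 - a\<^sup>2 * b\<^sup>2 + b ^ 4)"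
  obtains C where "\<And>P. P \<in> {P1, P2, P3} \<Longrightarrow> (dist P C)\<^sup>2 = (norm C)\<^sup>2 + \<delta>"
    and "4 * a\<^sup>2 * (fst C)\<^sup>2 * (\<delta> - b\<^sup>2)\<^sup>2 + 4 * b\<^sup>2 * (snd C)\<^sup>2 * (a\<^sup>2 - \<delta>)\<^sup>2 = (a\<^sup>2 - \<delta>)\<^sup>2 * (\<delta> - b\<^sup>2)\<^sup>2"
proof -
  have "a > 0" using assms(1,2) by simp
  have on: "on_ellipse a b P1" "on_ellipse a b P2" "on_ellipse a b P3"
    using assms(3) by (simp_all add: three_periodic_def)
  define z1 z2 z3 where "z1 = eccentric a b P1" and "z2 = eccentric a b P2" and "z3 = eccentric a b P3"
  note ecc = eccentric_on_ellipse[OF \<open>a > 0\<close> assms(2)]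
  obtain t where caustic: "(a\<^sup>2 - b\<^sup>2) * t = a\<^sup>2 + b\<^sup>2 - 2 * \<delta>"
    and pon: "1 + complex_of_real t * z1\<^sup>2 \<noteq> 0"
      "z2 + z3 = - z1 * (1 - (complex_of_real t)\<^sup>2) / (1 + complex_of_real t * z1\<^sup>2)"
      "z2 * z3 = (z1\<^sup>2 + complex_of_real t) / (1 + complex_of_real t * z1\<^sup>2)"
    using three_periodic_poncelet[OF assms(1-3)] unfolding z1_def z2_def z3_def \<delta>_def by blast
  have "z1 \<noteq> 0" "z2 \<noteq> 0" "z3 \<noteq> 0"
    using ecc(1) on by (simp_all add: z1_def z2_def z3_def)
  define w where "w = 1 / (z1 * z2 * z3)"
  define s1 s2 s3 where "s1 = z1 + z2 + z3 + w"
    and "s2 = z1 * z2 + z1 * z3 + z1 * w + z2 * z3 + z2 * w + z3 * w"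
    and "s3 = z1 * z2 * z3 + z1 * z2 * w + z1 * z3 * w + z2 * z3 * w"
  note sym = poncelet_symmetric_functions[OF \<open>z1 \<noteq> 0\<close> \<open>z2 \<noteq> 0\<close> \<open>z3 \<noteq> 0\<close> pon,
      folded w_def, folded s1_def s2_def s3_def]
  \<comment> \<open>the fourth root w makes s3 the conjugate of s1, as all four roots lie on the unit circle\<close>
  have "cnj z1 = inverse z1" "cnj z2 = inverse z2" "cnj z3 = inverse z3"
    using ecc(2) on by (simp_all add: z1_def z2_def z3_def)
  then have "cnj s1 = inverse z1 + inverse z2 + inverse z3 + 1 / (inverse z1 * inverse z2 * inverse z3)"
    by (simp add: s1_def w_def)
  also have "\<dots> = s3"
    using \<open>z1 \<noteq> 0\<close> \<open>z2 \<noteq> 0\<close> \<open>z3 \<noteq> 0\<close> by (simp add: s3_def w_def field_simps)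
  finally have "cnj s1 = s3" .
  define U V where "U = Re s1" and "V = Im s1"
  have U: "2 * complex_of_real U = s1 + s3" and V: "2 * \<i> * complex_of_real V = s1 - s3"
    unfolding \<open>cnj s1 = s3\<close>[symmetric] complex_add_cnj complex_diff_cnj U_def V_def by simp_all
  have locus: "U\<^sup>2 * (1 - t)\<^sup>2 + V\<^sup>2 * (1 + t)\<^sup>2 = (1 + t)\<^sup>2 * (1 - t)\<^sup>2"
  proof -
    have "complex_of_real (4 * (U\<^sup>2 * (1 - t)\<^sup>2 + V\<^sup>2 * (1 + t)\<^sup>2))
        = (2 * complex_of_real U)\<^sup>2 * (1 - complex_of_real t)\<^sup>2
          - (2 * \<i> * complex_of_real V)\<^sup>2 * (1 + complex_of_real t)\<^sup>2"
      by (simp add: power_mult_distrib algebra_simps)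
    also have "\<dots> = complex_of_real (4 * ((1 + t)\<^sup>2 * (1 - t)\<^sup>2))"
      unfolding U V sym(2) by simp
    finally show ?thesis
      by (simp only: of_real_eq_iff) simp
  qed
  define C where "C = ((a\<^sup>2 - b\<^sup>2) * U / (4 * a), - ((a\<^sup>2 - b\<^sup>2) * V / (4 * b)))"
  show thesis
  proof
    have "a\<^sup>2 - \<delta> = (a\<^sup>2 - b\<^sup>2) * (1 + t) / 2" "\<delta> - b\<^sup>2 = (a\<^sup>2 - b\<^sup>2) * (1 - t) / 2"
      using caustic by algebra+
    have "4 * a\<^sup>2 * (fst C)\<^sup>2 * (\<delta> - b\<^sup>2)\<^sup>2 + 4 * b\<^sup>2 * (snd C)\<^sup>2 * (a\<^sup>2 - \<delta>)\<^sup>2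
        = (a\<^sup>2 - b\<^sup>2) ^ 4 / 16 * (U\<^sup>2 * (1 - t)\<^sup>2 + V\<^sup>2 * (1 + t)\<^sup>2)"
      using \<open>a > 0\<close> assms(2) unfolding C_def fst_conv snd_conv \<open>a\<^sup>2 - \<delta> = _\<close> \<open>\<delta> - b\<^sup>2 = _\<close>
      by (simp add: power_divide power_mult_distrib field_simps) algebra
    also have "\<dots> = (a\<^sup>2 - \<delta>)\<^sup>2 * (\<delta> - b\<^sup>2)\<^sup>2"
      unfolding locus \<open>a\<^sup>2 - \<delta> = _\<close> \<open>\<delta> - b\<^sup>2 = _\<close>
      by (simp add: power2_eq_square power4_eq_xxxx algebra_simps)
    finally show "4 * a\<^sup>2 * (fst C)\<^sup>2 * (\<delta> - b\<^sup>2)\<^sup>2 + 4 * b\<^sup>2 * (snd C)\<^sup>2 * (a\<^sup>2 - \<delta>)\<^sup>2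
        = (a\<^sup>2 - \<delta>)\<^sup>2 * (\<delta> - b\<^sup>2)\<^sup>2" .
    show "(dist P C)\<^sup>2 = (norm C)\<^sup>2 + \<delta>" if "P \<in> {P1, P2, P3}" for P
    proof -
      obtain x y where P: "P = (x, y)" by (cases P)
      define z where "z = eccentric a b P"
      have "on_ellipse a b P" using that on by auto
      note ecc_z = ecc[OF this, folded z_def]
      have "z \<in> {z1, z2, z3}" using that by (auto simp: z_def z1_def z2_def z3_def)
      moreover have "z1 * z2 * z3 * w = 1"
        using \<open>z1 \<noteq> 0\<close> \<open>z2 \<noteq> 0\<close> \<open>z3 \<noteq> 0\<close> by (simp add: w_def)
      then have "z ^ 4 - s1 * z ^ 3 + s2 * z\<^sup>2 - s3 * z + 1 = (z - z1) * (z - z2) * (z - z3) * (z - w)"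
        unfolding s1_def s2_def s3_def by algebra
      ultimately have root: "z ^ 4 - s1 * z ^ 3 + s2 * z\<^sup>2 - s3 * z + 1 = 0"
        by auto
      have "- 4 * \<delta> = (a\<^sup>2 - b\<^sup>2) * (2 * t) - 2 * (a\<^sup>2 + b\<^sup>2)"
        using caustic by algebra
      then have "complex_of_real (- 4 * \<delta>) = ((complex_of_real a)\<^sup>2 - (complex_of_real b)\<^sup>2) * s2
          - 2 * ((complex_of_real a)\<^sup>2 + (complex_of_real b)\<^sup>2)"
        unfolding sym(1) by simp
      from ellipse_circle_quartic[OF ecc_z(1) _ _ ecc_z(3,4) U V this] \<open>a > 0\<close> assms(2) root
      have "x\<^sup>2 + y\<^sup>2 - 2 * fst C * x - 2 * snd C * y - \<delta> = 0"
        by (simp add: P C_def del: of_real_diff)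
      moreover obtain c1 c2 where "C = (c1, c2)" by (cases C)
      ultimately show ?thesis
        by (simp add: P dist_sq_Pair norm_Pair) (simp add: power2_eq_square algebra_simps)
    qed
  qed
qed

section \<open>The focus-inversive circumcentre\<close>

lemma focus_inversive_center_dist:
  fixes a b \<rho> r :: real and C :: "real \<times> real"
  assumes "a > b" "b > 0"
  defines "c \<equiv> sqrt (a\<^sup>2 - b\<^sup>2)" and "\<delta> \<equiv> sqrt (a ^ 4 - a\<^sup>2 * b\<^sup>2 + b ^ 4)"
  defines "pw \<equiv> (dist (- c, 0) C)\<^sup>2 - r\<^sup>2"
  assumes locus: "4 * a\<^sup>2 * (fst C)\<^sup>2 * (\<delta> - b\<^sup>2)\<^sup>2 + 4 * b\<^sup>2 * (snd C)\<^sup>2 * (a\<^sup>2 - \<delta>)\<^sup>2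
                  = (a\<^sup>2 - \<delta>)\<^sup>2 * (\<delta> - b\<^sup>2)\<^sup>2"
    and "r\<^sup>2 = (norm C)\<^sup>2 + \<delta>" and "pw \<noteq> 0"
  shows "dist ((- c, 0) + (\<rho>\<^sup>2 / pw) *\<^sub>R (C - (- c, 0))) (- c * (1 + \<rho>\<^sup>2 * (a\<^sup>2 + b\<^sup>2) / (2 * b ^ 4)), 0)
           = \<rho>\<^sup>2 * (a * (\<delta> - b\<^sup>2)) / (2 * b ^ 4)"
proof -
  obtain X1 X2 where C: "C = (X1, X2)" by (cases C)
  note \<delta> = delta_bounds[OF assms(1,2), folded \<delta>_def]
  have "c\<^sup>2 = a\<^sup>2 - b\<^sup>2"
    unfolding c_def using assms(1,2) by (simp add: power_strict_mono)
  have pw: "pw = c\<^sup>2 + 2 * c * X1 - \<delta>"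
    using \<open>r\<^sup>2 = (norm C)\<^sup>2 + \<delta>\<close>
    by (simp add: pw_def C dist_sq_Pair norm_Pair) (simp add: power2_eq_square algebra_simps)
  have "4 * b\<^sup>2 * (a\<^sup>2 - \<delta>)\<^sup>2 * (((2 * b ^ 4) * (X1 + c) + c * (a\<^sup>2 + b\<^sup>2) * pw)\<^sup>2 + (2 * b ^ 4)\<^sup>2 * X2\<^sup>2)
      = 4 * b\<^sup>2 * (a\<^sup>2 - \<delta>)\<^sup>2 * ((a * (\<delta> - b\<^sup>2))\<^sup>2 * pw\<^sup>2)"
    using \<open>c\<^sup>2 = a\<^sup>2 - b\<^sup>2\<close> \<delta>(1) locus unfolding pw C fst_conv snd_conv by algebra
  moreover have "4 * b\<^sup>2 * (a\<^sup>2 - \<delta>)\<^sup>2 \<noteq> 0"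
    using assms(2) \<delta>(3) by simp
  ultimately have key: "((2 * b ^ 4) * (X1 + c) + c * (a\<^sup>2 + b\<^sup>2) * pw)\<^sup>2 + (2 * b ^ 4)\<^sup>2 * X2\<^sup>2
      = (a * (\<delta> - b\<^sup>2))\<^sup>2 * pw\<^sup>2"
    by simp
  define K where "K = \<rho>\<^sup>2 / (2 * b ^ 4 * pw)"
  define Z M where "Z = (- c, 0) + (\<rho>\<^sup>2 / pw) *\<^sub>R (C - (- c, 0))"
    and "M = (- c * (1 + \<rho>\<^sup>2 * (a\<^sup>2 + b\<^sup>2) / (2 * b ^ 4)), 0 :: real)"
  have "Z - M = (K * ((2 * b ^ 4) * (X1 + c) + c * (a\<^sup>2 + b\<^sup>2) * pw), K * ((2 * b ^ 4) * X2))"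
    using assms(2) \<open>pw \<noteq> 0\<close> by (simp add: Z_def M_def C K_def field_simps)
  then have "(dist Z M)\<^sup>2
      = (K * ((2 * b ^ 4) * (X1 + c) + c * (a\<^sup>2 + b\<^sup>2) * pw))\<^sup>2 + (K * ((2 * b ^ 4) * X2))\<^sup>2"
    by (simp only: dist_norm norm_Pair) simp
  also have "\<dots> = K\<^sup>2 * (((2 * b ^ 4) * (X1 + c) + c * (a\<^sup>2 + b\<^sup>2) * pw)\<^sup>2 + (2 * b ^ 4)\<^sup>2 * X2\<^sup>2)"
    by algebra
  also have "\<dots> = (\<rho>\<^sup>2 * (a * (\<delta> - b\<^sup>2)) / (2 * b ^ 4))\<^sup>2"
    unfolding key K_def using \<open>pw \<noteq> 0\<close> by (simp add: power_mult_distrib power_divide)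
  finally show ?thesis
    using \<delta>(2) assms(1,2) by (simp add: Z_def M_def power2_eq_iff_nonneg)
qed

lemma focus_not_on_ellipse:
  assumes "a > b" "b > 0"
  shows "\<not> on_ellipse a b (- sqrt (a\<^sup>2 - b\<^sup>2), 0)"
proof
  assume "on_ellipse a b (- sqrt (a\<^sup>2 - b\<^sup>2), 0)"
  moreover have "b\<^sup>2 < a\<^sup>2"
    using assms by (simp add: power_strict_mono)
  ultimately have "a\<^sup>2 - b\<^sup>2 = a\<^sup>2"
    using assms by (simp add: on_ellipse_def)
  then show False
    using assms(2) by simp
qed

theorem mainTheorem12:
  fixes a b \<rho> :: real and P1 P2 P3 X :: "real \<times> real"
  assumes "a > b" and "b > 0" and "\<rho> > 0"
    and "three_periodic a b P1 P2 P3"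
    and "is_circumcenter X
           (invert (- sqrt (a\<^sup>2 - b\<^sup>2), 0) \<rho> P1)
           (invert (- sqrt (a\<^sup>2 - b\<^sup>2), 0) \<rho> P2)
           (invert (- sqrt (a\<^sup>2 - b\<^sup>2), 0) \<rho> P3)"
  shows "dist X (- sqrt (a\<^sup>2 - b\<^sup>2) * (1 + \<rho>\<^sup>2 * (a\<^sup>2 + b\<^sup>2) / (2 * b ^ 4)), 0)
           = \<rho>\<^sup>2 * (a * (sqrt (a ^ 4 - a\<^sup>2 * b\<^sup>2 + b ^ 4) - b\<^sup>2)) / (2 * b ^ 4)"
proof -
  define c \<delta> where "c = sqrt (a\<^sup>2 - b\<^sup>2)" and "\<delta> = sqrt (a ^ 4 - a\<^sup>2 * b\<^sup>2 + b ^ 4)"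
  obtain C where on_circle: "\<And>P. P \<in> {P1, P2, P3} \<Longrightarrow> (dist P C)\<^sup>2 = (norm C)\<^sup>2 + \<delta>"
    and locus: "4 * a\<^sup>2 * (fst C)\<^sup>2 * (\<delta> - b\<^sup>2)\<^sup>2 + 4 * b\<^sup>2 * (snd C)\<^sup>2 * (a\<^sup>2 - \<delta>)\<^sup>2
                   = (a\<^sup>2 - \<delta>)\<^sup>2 * (\<delta> - b\<^sup>2)\<^sup>2"
    using three_periodic_circumcircle[OF assms(1,2,4)] unfolding \<delta>_def by blast
  define r where "r = dist P1 C"
  have "dist P C = r" if "P \<in> {P1, P2, P3}" for P
  proof -
    have "(dist P C)\<^sup>2 = (dist P1 C)\<^sup>2"
      using on_circle[OF that] on_circle[of P1] by simp
    then show ?thesis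
      unfolding r_def by (metis power2_eq_iff_nonneg zero_le_dist)
  qed
  moreover have "P \<noteq> (- c, 0)" if "P \<in> {P1, P2, P3}" for P
    using that assms(4) focus_not_on_ellipse[OF assms(1,2)] by (auto simp: three_periodic_def c_def)
  moreover have "P1 \<noteq> P2" "P1 \<noteq> P3" "P2 \<noteq> P3"
    using assms(4) by (simp_all add: three_periodic_def)
  ultimately have "(dist (- c, 0) C)\<^sup>2 \<noteq> r\<^sup>2
      \<and> X = (- c, 0) + (\<rho>\<^sup>2 / ((dist (- c, 0) C)\<^sup>2 - r\<^sup>2)) *\<^sub>R (C - (- c, 0))"
    using circumcenter_invert_circle[of \<rho> P1 "(- c, 0)" P2 P3 C r X] assms(3,5)
    by (simp add: c_def)
  then show ?thesis
    using focus_inversive_center_dist[OF assms(1,2) locus[unfolded \<delta>_def], of r \<rho>] on_circle[of P1]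
    by (simp add: r_def c_def \<delta>_def)
qed

end
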